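(* Let $L$ be an ultraparacompact locale with $\bot\neq\top$, $B$ its Boolean algebra of complemented opens, $\mathcal{J}$ the set of partitions of $L$, and $F$ a $B_{\mathcal{J}}$-set with étale space $\sigma\colon E(F)\to L$. Then the space of points $\mathrm{pt}\,E(F)$ is homeomorphic to $\sum_{p\in\mathrm{pt}L}|F|/{\equiv_p}$, where $x\equiv_p y$ iff there is $b\in B$ with $p\in b$ and $x\equiv_b y$, equipped with the topology generated by the subbasic open sets $[x\,|\,b]=\{[x]_p: p\in b\}$ for $x\in|F|$, $b\in B$.
   Context: Partitions of $L$: sets $P$ of opens, pairwise disjoint ($u\wedge v=\bot$ for $u\neq v$), not containing $\bot$, with $\bigvee P=\top$; their members are complemented. $L$ ultraparacompact: every open is a join of complemented opens and every cover is refined by a partition. A $B_{\mathcal{J}}$-set $F$ is a set $|F|$ with binary operations $b(-,-)$ for $b\in B$ satisfying $b(x,x)=x$, $b(b(x,y),z)=b(x,z)$, $b(x,b(y,z))=b(x,z)$, $\top(x,y)=x$, $(\neg b)(x,y)=b(y,x)$, $(b\wedge c)(x,y)=b(c(x,y),y)$, and operations $P\colon|F|^P\to|F|$ for each $P\in\mathcal{J}$ satisfying $P(\lambda b.z)=z$, $P(\lambda b.b(x_b,y_b))=P(\lambda b.x_b)$, $b(P(x),x_b)=x_b$ for $b\in P$. For $b\in B$, $x\equiv_b y$ iff $b(x,y)=y$. $\mathcal{O}(L)$ is a $B_{\mathcal{J}}$-set with $b(u,v)=(b\wedge u)\vee(\neg b\wedge v)$ and $P(\lambda b.u_b)=\bigvee_{b\in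 P}(b\wedge u_b)$. The étale space $E(F)$ is the locale whose frame is the set of $B_{\mathcal{J}}$-set homomorphisms $F\to\mathcal{O}(L)$ ordered pointwise, and $\sigma^{-1}(u)=\mathrm{const}_u$. A point $p$ of $L$ is a frame map $\mathcal{O}(L)\to\{\bot,\top\}$; $p\in b$ means $p(b)=\top$. $[x]_p$ is the $\equiv_p$-class of $x$ in the fibre over $p$. *)

theory Defs
  imports "HOL-Analysis.Analysis"
begin

definition frame_law :: "'a::complete_lattice itself \<Rightarrow> bool" where
  "frame_law _ \<longleftrightarrow> (\<forall>(a::'a) S. inf a (Sup S) = Sup ((\<lambda>s. inf a s) ` S))"

definition complemented :: "'a::complete_lattice \<Rightarrow> bool" where
  "complemented b \<longleftrightarrow> (\<exists>c. inf b c = bot \<and> sup b c = top)"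

definition compl_opens :: "'a::complete_lattice set" where
  "compl_opens = {b. complemented b}"

text \<open>The complement of a complemented open (unique in a distributive lattice).\<close>
definition lcompl :: "'a::complete_lattice \<Rightarrow> 'a" where
  "lcompl b = (THE c. inf b c = bot \<and> sup b c = top)"

definition is_partition :: "'a::complete_lattice set \<Rightarrow> bool" where
  "is_partition P \<longleftrightarrow> (\<forall>u\<in>P. \<forall>v\<in>P. u \<noteq> v \<longrightarrow> inf u v = bot) \<and> bot \<notin> P \<and> Sup P = top"

definition partitions :: "'a::complete_lattice set set" where
  "partitions = {P. is_partition P}"

definition ultraparacompact :: "'a::complete_lattice itself \<Rightarrow> bool" where
  "ultraparacompact _ \<longleftrightarrow>
     (\<forall>u::'a. \<exists>S \<subseteq> compl_opens. u = Sup S) \<and>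
     (\<forall>S::'a set. Sup S = top \<longrightarrow> (\<exists>P\<in>partitions. \<forall>v\<in>P. \<exists>u\<in>S. v \<le> u))"

text \<open>A B_J-set: carrier C, binary operations bop b (b in B), and operations pop P
  (P in J) acting on families in C^P (extensional functions on P).\<close>
definition BJ_set :: "'x set \<Rightarrow> ('a::complete_lattice \<Rightarrow> 'x \<Rightarrow> 'x \<Rightarrow> 'x)
     \<Rightarrow> ('a set \<Rightarrow> ('a \<Rightarrow> 'x) \<Rightarrow> 'x) \<Rightarrow> bool" where
  "BJ_set C bop pop \<longleftrightarrow>
     (\<forall>b\<in>compl_opens. \<forall>x\<in>C. \<forall>y\<in>C. bop b x y \<in> C) \<and>
     (\<forall>P\<in>partitions. \<forall>xs\<in>P \<rightarrow>\<^sub>E C. pop P xs \<in> C) \<and>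
     (\<forall>b\<in>compl_opens. \<forall>x\<in>C. bop b x x = x) \<and>
     (\<forall>b\<in>compl_opens. \<forall>x\<in>C. \<forall>y\<in>C. \<forall>z\<in>C. bop b (bop b x y) z = bop b x z) \<and>
     (\<forall>b\<in>compl_opens. \<forall>x\<in>C. \<forall>y\<in>C. \<forall>z\<in>C. bop b x (bop b y z) = bop b x z) \<and>
     (\<forall>x\<in>C. \<forall>y\<in>C. bop top x y = x) \<and>
     (\<forall>b\<in>compl_opens. \<forall>x\<in>C. \<forall>y\<in>C. bop (lcompl b) x y = bop b y x) \<and>
     (\<forall>b\<in>compl_opens. \<forall>c\<in>compl_opens. \<forall>x\<in>C. \<forall>y\<in>C.
         bop (inf b c) x y = bop b (bop c x y) y) \<and>
     (\<forall>P\<in>partitions. \<forall>z\<in>C. pop P (\<lambda>b\<in>P. z) = z) \<and>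
     (\<forall>P\<in>partitions. \<forall>xs\<in>P \<rightarrow>\<^sub>E C. \<forall>ys\<in>P \<rightarrow>\<^sub>E C.
         pop P (\<lambda>b\<in>P. bop b (xs b) (ys b)) = pop P xs) \<and>
     (\<forall>P\<in>partitions. \<forall>xs\<in>P \<rightarrow>\<^sub>E C. \<forall>b\<in>P. bop b (pop P xs) (xs b) = xs b)"

definition OL_bop :: "'a::complete_lattice \<Rightarrow> 'a \<Rightarrow> 'a \<Rightarrow> 'a" where
  "OL_bop b u v = sup (inf b u) (inf (lcompl b) v)"

definition OL_pop :: "'a::complete_lattice set \<Rightarrow> ('a \<Rightarrow> 'a) \<Rightarrow> 'a" where
  "OL_pop P us = Sup ((\<lambda>b. inf b (us b)) ` P)"

definition BJ_hom :: "'x set \<Rightarrow> ('a::complete_lattice \<Rightarrow> 'x \<Rightarrow> 'x \<Rightarrow> 'x)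
     \<Rightarrow> ('a set \<Rightarrow> ('a \<Rightarrow> 'x) \<Rightarrow> 'x) \<Rightarrow> ('x \<Rightarrow> 'a) \<Rightarrow> bool" where
  "BJ_hom C bop pop h \<longleftrightarrow> h \<in> extensional C \<and>
     (\<forall>b\<in>compl_opens. \<forall>x\<in>C. \<forall>y\<in>C. h (bop b x y) = OL_bop b (h x) (h y)) \<and>
     (\<forall>P\<in>partitions. \<forall>xs\<in>P \<rightarrow>\<^sub>E C. h (pop P xs) = OL_pop P (\<lambda>b. h (xs b)))"

text \<open>The frame of the etale space E(F): homomorphisms ordered pointwise.\<close>
definition etale_frame :: "'x set \<Rightarrow> ('a::complete_lattice \<Rightarrow> 'x \<Rightarrow> 'x \<Rightarrow> 'x)
     \<Rightarrow> ('a set \<Rightarrow> ('a \<Rightarrow> 'x) \<Rightarrow> 'x) \<Rightarrow> ('x \<Rightarrow> 'a) set" where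
  "etale_frame C bop pop = {h. BJ_hom C bop pop h}"

definition pointwise_le :: "'x set \<Rightarrow> ('x \<Rightarrow> 'a::complete_lattice) \<Rightarrow> ('x \<Rightarrow> 'a) \<Rightarrow> bool" where
  "pointwise_le C h k \<longleftrightarrow> (\<forall>x\<in>C. h x \<le> k x)"

definition is_lub_in :: "'c set \<Rightarrow> ('c \<Rightarrow> 'c \<Rightarrow> bool) \<Rightarrow> 'c set \<Rightarrow> 'c \<Rightarrow> bool" where
  "is_lub_in X le S s \<longleftrightarrow> s \<in> X \<and> (\<forall>y\<in>S. le y s) \<and> (\<forall>z\<in>X. (\<forall>y\<in>S. le y z) \<longrightarrow> le s z)"

definition is_glb_in :: "'c set \<Rightarrow> ('c \<Rightarrow> 'c \<Rightarrow> bool) \<Rightarrow> 'c set \<Rightarrow> 'c \<Rightarrow> bool" where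
  "is_glb_in X le S s \<longleftrightarrow> s \<in> X \<and> (\<forall>y\<in>S. le s y) \<and> (\<forall>z\<in>X. (\<forall>y\<in>S. le z y) \<longrightarrow> le z s)"

text \<open>A point, i.e. a frame map into {bot,top}, represented by the set of elements
  sent to top: it preserves the top, binary meets and arbitrary joins.\<close>
definition frame_point :: "'c set \<Rightarrow> ('c \<Rightarrow> 'c \<Rightarrow> bool) \<Rightarrow> 'c set \<Rightarrow> bool" where
  "frame_point X le p \<longleftrightarrow> p \<subseteq> X \<and>
     (\<forall>t. is_glb_in X le {} t \<longrightarrow> t \<in> p) \<and>
     (\<forall>a\<in>X. \<forall>b\<in>X. \<forall>m. is_glb_in X le {a, b} m \<longrightarrow> (m \<in> p \<longleftrightarrow> a \<in> p \<and> b \<in> p)) \<and>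
     (\<forall>S s. S \<subseteq> X \<longrightarrow> is_lub_in X le S s \<longrightarrow> (s \<in> p \<longleftrightarrow> (\<exists>y\<in>S. y \<in> p)))"

definition locale_points :: "'a::complete_lattice set set" where
  "locale_points = {p. frame_point UNIV (\<le>) p}"

definition point_space :: "'c set \<Rightarrow> ('c \<Rightarrow> 'c \<Rightarrow> bool) \<Rightarrow> 'c set topology" where
  "point_space X le = subtopology (topology_generated_by
     {{p. frame_point X le p \<and> u \<in> p} | u. u \<in> X}) {p. frame_point X le p}"

definition etale_points :: "'x set \<Rightarrow> ('a::complete_lattice \<Rightarrow> 'x \<Rightarrow> 'x \<Rightarrow> 'x)
     \<Rightarrow> ('a set \<Rightarrow> ('a \<Rightarrow> 'x) \<Rightarrow> 'x) \<Rightarrow> ('x \<Rightarrow> 'a) set topology" where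
  "etale_points C bop pop = point_space (etale_frame C bop pop) (pointwise_le C)"

definition equiv_b :: "('a \<Rightarrow> 'x \<Rightarrow> 'x \<Rightarrow> 'x) \<Rightarrow> 'a \<Rightarrow> 'x \<Rightarrow> 'x \<Rightarrow> bool" where
  "equiv_b bop b x y \<longleftrightarrow> bop b x y = y"

definition equiv_p :: "('a::complete_lattice \<Rightarrow> 'x \<Rightarrow> 'x \<Rightarrow> 'x) \<Rightarrow> 'a set \<Rightarrow> 'x \<Rightarrow> 'x \<Rightarrow> bool" where
  "equiv_p bop p x y \<longleftrightarrow> (\<exists>b\<in>compl_opens. b \<in> p \<and> equiv_b bop b x y)"

definition stalk_class :: "'x set \<Rightarrow> ('a::complete_lattice \<Rightarrow> 'x \<Rightarrow> 'x \<Rightarrow> 'x) \<Rightarrow> 'a set \<Rightarrow> 'x \<Rightarrow> 'x set" where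
  "stalk_class C bop p x = {y\<in>C. equiv_p bop p x y}"

text \<open>Subbasic open [x | b] = {[x]_p : p \<in> b}, elements of the sum being pairs (p, [x]_p).\<close>
definition subbasic :: "'x set \<Rightarrow> ('a::complete_lattice \<Rightarrow> 'x \<Rightarrow> 'x \<Rightarrow> 'x) \<Rightarrow> 'x \<Rightarrow> 'a \<Rightarrow> ('a set \<times> 'x set) set" where
  "subbasic C bop x b = {(p, stalk_class C bop p x) | p. p \<in> locale_points \<and> b \<in> p}"

definition stalk_sum :: "'x set \<Rightarrow> ('a::complete_lattice \<Rightarrow> 'x \<Rightarrow> 'x \<Rightarrow> 'x) \<Rightarrow> ('a set \<times> 'x set) set" where
  "stalk_sum C bop = {(p, stalk_class C bop p x) | p x. p \<in> locale_points \<and> x \<in> C}"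

definition stalk_sum_space :: "'x set \<Rightarrow> ('a::complete_lattice \<Rightarrow> 'x \<Rightarrow> 'x \<Rightarrow> 'x) \<Rightarrow> ('a set \<times> 'x set) topology" where
  "stalk_sum_space C bop = subtopology
     (topology_generated_by {subbasic C bop x b | x b. x \<in> C \<and> b \<in> compl_opens})
     (stalk_sum C bop)"

end

theory Submission
  imports Defs
begin

text \<open>A point Q of the etale space lies over the point p = {u. \<sigma>\<inverse>(u) \<in> Q} of L.
  Each x \<in> |F| determines an open of E(F), the image of the section x, namely
  y \<mapsto> [[x = y]], the join of all complemented b with x \<equiv>_b y. These opens cover E(F),
  so Q contains one of them, and since every open h agrees with the constant \<sigma>\<inverse>(h x)
  on [[x = -]], Q = {h. h x \<in> p}. Conversely every class [x]_p gives the point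
  {h. h x \<in> p}, and the two constructions are inverse. The subbasic open [x | b] corresponds
  to the open \<sigma>\<inverse>(b) \<and> [[x = -]], and an open h of E(F) to the union of the [y | b] with
  b \<le> h y; for the latter, every open of L must be a join of complemented opens.\<close>

section \<open>Points of frames\<close>

lemma is_glb_in_unique:
  assumes "\<And>a b. a \<in> X \<Longrightarrow> b \<in> X \<Longrightarrow> le a b \<Longrightarrow> le b a \<Longrightarrow> a = b"
    and "is_glb_in X le S g" and "is_glb_in X le S g'"
  shows "g = g'"
  using assms unfolding is_glb_in_def by blast

lemma is_lub_in_unique:
  assumes "\<And>a b. a \<in> X \<Longrightarrow> b \<in> X \<Longrightarrow> le a b \<Longrightarrow> le b a \<Longrightarrow> a = b"
    and "is_lub_in X le S s" and "is_lub_in X le S s'"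
  shows "s = s'"
  using assms unfolding is_lub_in_def by blast

lemma frame_point_iff:
  assumes antisym: "\<And>a b. a \<in> X \<Longrightarrow> b \<in> X \<Longrightarrow> le a b \<Longrightarrow> le b a \<Longrightarrow> a = b"
    and glb_empty: "is_glb_in X le {} t"
    and glb_pair: "\<And>a b. a \<in> X \<Longrightarrow> b \<in> X \<Longrightarrow> is_glb_in X le {a, b} (m a b)"
    and lub: "\<And>S. S \<subseteq> X \<Longrightarrow> is_lub_in X le S (j S)"
  shows "frame_point X le p \<longleftrightarrow> p \<subseteq> X \<and> t \<in> p \<and>
      (\<forall>a\<in>X. \<forall>b\<in>X. m a b \<in> p \<longleftrightarrow> a \<in> p \<and> b \<in> p) \<and>
      (\<forall>S. S \<subseteq> X \<longrightarrow> (j S \<in> p \<longleftrightarrow> (\<exists>y\<in>S. y \<in> p)))"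
proof -
  have "is_glb_in X le {} t' \<longleftrightarrow> t' = t" for t'
    using is_glb_in_unique[OF antisym _ glb_empty] glb_empty by blast
  moreover have "is_glb_in X le {a, b} m' \<longleftrightarrow> m' = m a b" if "a \<in> X" "b \<in> X" for a b m'
    using is_glb_in_unique[OF antisym _ glb_pair[OF that]] glb_pair[OF that] by blast
  moreover have "is_lub_in X le S s \<longleftrightarrow> s = j S" if "S \<subseteq> X" for S s
    using is_lub_in_unique[OF antisym _ lub[OF that]] lub[OF that] by blast
  ultimately show ?thesis
    unfolding frame_point_def by auto
qed

lemma locale_points_iff:
  fixes p :: "'a::complete_lattice set"
  shows "p \<in> locale_points \<longleftrightarrow> top \<in> p \<and> (\<forall>a b. inf a b \<in> p \<longleftrightarrow> a \<in> p \<and> b \<in> p) \<and>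
      (\<forall>S. Sup S \<in> p \<longleftrightarrow> (\<exists>y\<in>S. y \<in> p))"
  unfolding locale_points_def mem_Collect_eq
  by (subst frame_point_iff[where t = top and m = inf and j = Sup])
    (auto simp: is_glb_in_def is_lub_in_def intro: Sup_upper Sup_least)

context
  fixes p :: "'a::complete_lattice set"
  assumes p: "p \<in> locale_points"
begin

lemma top_in_locale_point: "top \<in> p"
  using p by (simp add: locale_points_iff)

lemma inf_in_locale_point_iff: "inf a b \<in> p \<longleftrightarrow> a \<in> p \<and> b \<in> p"
  using p by (simp add: locale_points_iff)

lemma Sup_in_locale_point_iff: "Sup S \<in> p \<longleftrightarrow> (\<exists>y\<in>S. y \<in> p)"
  using p by (simp add: locale_points_iff)

lemma locale_point_mono: "a \<le> b \<Longrightarrow> a \<in> p \<Longrightarrow> b \<in> p"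
  using inf_in_locale_point_iff[of a b] by (simp add: inf_absorb1)

end

lemma openin_point_space:
  "u \<in> X \<Longrightarrow> openin (point_space X le) {p. frame_point X le p \<and> u \<in> p}"
  unfolding point_space_def openin_subtopology by (blast intro: topology_generated_by_Basis)

section \<open>Subspaces of generated topologies\<close>

lemma continuous_map_subtopology_generated:
  assumes "A \<subseteq> \<Union>\<A>" and "B \<subseteq> \<Union>\<B>" and "f \<in> A \<rightarrow> B"
    and "\<And>U. U \<in> \<B> \<Longrightarrow> openin (subtopology (topology_generated_by \<A>) A) {a \<in> A. f a \<in> U}"
  shows "continuous_map (subtopology (topology_generated_by \<A>) A)
      (subtopology (topology_generated_by \<B>) B) f"
proof -
  have topspace: "topspace (subtopology (topology_generated_by \<A>) A) = A"
    using assms(1) by auto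
  show ?thesis
  proof (rule continuous_map_into_subtopology)
    show "continuous_map (subtopology (topology_generated_by \<A>) A) (topology_generated_by \<B>) f"
    proof (rule continuous_on_generated_topo)
      fix U assume "U \<in> \<B>"
      moreover have "f -` U \<inter> A = {a \<in> A. f a \<in> U}" by blast
      ultimately show "openin (subtopology (topology_generated_by \<A>) A)
          (f -` U \<inter> topspace (subtopology (topology_generated_by \<A>) A))"
        unfolding topspace using assms(4) by simp
    qed (use assms(2,3) topspace in auto)
    show "f \<in> topspace (subtopology (topology_generated_by \<A>) A) \<rightarrow> B"
      unfolding topspace by (rule assms(3))
  qed
qed

lemma homeomorphic_maps_subtopology_generated:
  assumes "A \<subseteq> \<Union>\<A>" and "B \<subseteq> \<Union>\<B>" and "f \<in> A \<rightarrow> B" and "g \<in> B \<rightarrow> A"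
    and "\<And>a. a \<in> A \<Longrightarrow> g (f a) = a" and "\<And>b. b \<in> B \<Longrightarrow> f (g b) = b"
    and "\<And>U. U \<in> \<B> \<Longrightarrow> openin (subtopology (topology_generated_by \<A>) A) {a \<in> A. f a \<in> U}"
    and "\<And>V. V \<in> \<A> \<Longrightarrow> openin (subtopology (topology_generated_by \<B>) B) {b \<in> B. g b \<in> V}"
  shows "homeomorphic_maps (subtopology (topology_generated_by \<A>) A)
      (subtopology (topology_generated_by \<B>) B) f g"
  unfolding homeomorphic_maps_def
  using assms continuous_map_subtopology_generated[of A \<A> B \<B> f]
    continuous_map_subtopology_generated[of B \<B> A \<A> g]
  by auto

section \<open>Complemented opens and partitions\<close>

lemma partition_disjoint:
  "P \<in> partitions \<Longrightarrow> c \<in> P \<Longrightarrow> d \<in> P \<Longrightarrow> c \<noteq> d \<Longrightarrow> inf c d = bot"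
  and Sup_partition: "P \<in> partitions \<Longrightarrow> Sup P = top"
  unfolding partitions_def is_partition_def by auto

lemma top_in_compl_opens: "top \<in> compl_opens"
  unfolding compl_opens_def complemented_def by (intro CollectI exI[of _ bot]) simp

context
  assumes frame_law: "frame_law TYPE('a::complete_lattice)"
begin

lemma frame_inf_Sup_distrib: "inf a (Sup S) = Sup (inf a ` S)" for a :: 'a
  using frame_law unfolding frame_law_def by blast

lemma frame_inf_sup_distrib: "inf a (sup x y) = sup (inf a x) (inf a y)" for a :: 'a
  using frame_inf_Sup_distrib[of a "{x, y}"] by simp

lemma frame_sup_inf_distrib: "sup a (inf x y) = inf (sup a x) (sup a y)" for a :: 'a
proof -
  have "inf (sup a x) (sup a y) = sup (inf (sup a x) a) (inf (sup a x) y)"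
    by (rule frame_inf_sup_distrib)
  also have "\<dots> = sup a (sup (inf a y) (inf x y))"
    using frame_inf_sup_distrib[of y a x]
    by (simp add: inf_commute sup_absorb1 sup_assoc)
  also have "\<dots> = sup a (inf x y)"
    by (simp add: sup_absorb1 flip: sup_assoc)
  finally show ?thesis ..
qed

lemma complement_unique:
  fixes b c c' :: 'a
  assumes "inf b c = bot" "sup b c = top" "inf b c' = bot" "sup b c' = top"
  shows "c = c'"
proof -
  have absorb: "d = inf d d'" if "inf b d = bot" "sup b d' = top" for d d'
  proof -
    have "d = inf d (sup b d')" using that(2) by simp
    also have "\<dots> = sup (inf d b) (inf d d')" by (rule frame_inf_sup_distrib)
    also have "\<dots> = inf d d'" using that(1) by (simp add: inf_commute)
    finally show ?thesis .
  qed
  have "c = inf c c'" using absorb assms(1,4) .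
  also have "\<dots> = inf c' c" by (rule inf_commute)
  also have "\<dots> = c'" by (rule sym[OF absorb[OF assms(3,2)]])
  finally show ?thesis .
qed

context
  fixes b :: 'a
  assumes b: "b \<in> compl_opens"
begin

lemma inf_lcompl: "inf b (lcompl b) = bot"
  and sup_lcompl: "sup b (lcompl b) = top"
proof -
  obtain c where c: "inf b c = bot" "sup b c = top"
    using b unfolding compl_opens_def complemented_def by blast
  have "lcompl b = c"
    unfolding lcompl_def using c complement_unique[OF _ _ c] by blast
  with c show "inf b (lcompl b) = bot" "sup b (lcompl b) = top" by simp_all
qed

lemma lcompl_in_compl_opens: "lcompl b \<in> compl_opens"
  unfolding compl_opens_def complemented_def
  using inf_lcompl sup_lcompl by (auto simp: inf_commute sup_commute)

lemma sup_inf_inf_lcompl: "sup (inf a b) (inf a (lcompl b)) = a"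
  using frame_inf_sup_distrib[of a b "lcompl b"] sup_lcompl by simp

lemma lcompl_split_eqI:
  assumes "inf b x = inf b y" and "inf (lcompl b) x = inf (lcompl b) y"
  shows "x = y"
proof -
  have "x = sup (inf x b) (inf x (lcompl b))" by (rule sup_inf_inf_lcompl[symmetric])
  also have "\<dots> = sup (inf y b) (inf y (lcompl b))"
    using assms by (simp only: inf_commute[of _ b] inf_commute[of _ "lcompl b"])
  also have "\<dots> = y" by (rule sup_inf_inf_lcompl)
  finally show ?thesis .
qed

lemma inf_OL_bop: "inf b (OL_bop b u v) = inf b u"
  using inf_lcompl by (simp add: OL_bop_def frame_inf_sup_distrib flip: inf_assoc)

lemma inf_lcompl_OL_bop: "inf (lcompl b) (OL_bop b u v) = inf (lcompl b) v"
  using inf_lcompl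
  by (simp add: OL_bop_def frame_inf_sup_distrib inf_commute[of "lcompl b" b] flip: inf_assoc)

lemma OL_bop_self: "OL_bop b u u = u"
  by (rule lcompl_split_eqI) (simp_all add: inf_OL_bop inf_lcompl_OL_bop)

lemma inf_OL_bop_OL_bop:
  "inf (OL_bop b u v) (OL_bop b u' v') = OL_bop b (inf u u') (inf v v')"
proof (rule lcompl_split_eqI)
  have "inf b (inf (OL_bop b u v) (OL_bop b u' v'))
      = inf (inf b (OL_bop b u v)) (inf b (OL_bop b u' v'))"
    by (simp add: inf_aci)
  then show "inf b (inf (OL_bop b u v) (OL_bop b u' v'))
      = inf b (OL_bop b (inf u u') (inf v v'))"
    by (simp add: inf_OL_bop inf_aci)
  have "inf (lcompl b) (inf (OL_bop b u v) (OL_bop b u' v'))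
      = inf (inf (lcompl b) (OL_bop b u v)) (inf (lcompl b) (OL_bop b u' v'))"
    by (simp add: inf_aci)
  then show "inf (lcompl b) (inf (OL_bop b u v) (OL_bop b u' v'))
      = inf (lcompl b) (OL_bop b (inf u u') (inf v v'))"
    by (simp add: inf_lcompl_OL_bop inf_aci)
qed

end

lemma inf_in_compl_opens:
  fixes b c :: 'a
  assumes b: "b \<in> compl_opens" and c: "c \<in> compl_opens"
  shows "inf b c \<in> compl_opens"
proof -
  let ?d = "sup (lcompl b) (lcompl c)"
  have "inf (inf b c) ?d = sup (inf (inf b c) (lcompl b)) (inf (inf b c) (lcompl c))"
    by (rule frame_inf_sup_distrib)
  also have "\<dots> = sup (inf c (inf b (lcompl b))) (inf b (inf c (lcompl c)))"
    by (simp only: inf_aci)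
  finally have "inf (inf b c) ?d = bot"
    by (simp add: inf_lcompl[OF b] inf_lcompl[OF c])
  moreover have "sup (inf b c) ?d = top"
  proof -
    have "sup b (lcompl b) \<le> sup ?d b" and "sup c (lcompl c) \<le> sup ?d c"
      by (simp_all add: le_supI1 le_supI2)
    then have "sup ?d b = top" and "sup ?d c = top"
      using sup_lcompl[OF b] sup_lcompl[OF c] by (simp_all add: top_unique)
    moreover have "sup ?d (inf b c) = inf (sup ?d b) (sup ?d c)"
      by (rule frame_sup_inf_distrib)
    ultimately have "sup ?d (inf b c) = top" by simp
    then show ?thesis by (simp add: sup_commute)
  qed
  ultimately show ?thesis
    unfolding compl_opens_def complemented_def by blast
qed

context
  fixes P :: "'a set"
  assumes P: "P \<in> partitions"
begin

lemma partition_subset_compl_opens: "P \<subseteq> compl_opens"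
proof (rule subsetI)
  fix c assume c: "c \<in> P"
  have "inf c (Sup (P - {c})) = Sup (inf c ` (P - {c}))"
    by (rule frame_inf_Sup_distrib)
  also have "\<dots> = bot"
    using partition_disjoint[OF P] c by (auto simp: SUP_bot_conv)
  finally have "inf c (Sup (P - {c})) = bot" .
  moreover have "insert c (P - {c}) = P"
    using c by blast
  then have "sup c (Sup (P - {c})) = top"
    using Sup_partition[OF P] complete_lattice_class.Sup_insert[of c "P - {c}"] by simp
  ultimately show "c \<in> compl_opens"
    unfolding compl_opens_def complemented_def by blast
qed

lemma partition_eqI:
  assumes "\<And>c. c \<in> P \<Longrightarrow> inf c x = inf c y"
  shows "x = y"
proof -
  have Sup_inf_partition: "(SUP c\<in>P. inf c z) = z" for z
    using frame_inf_Sup_distrib[of z P] Sup_partition[OF P] by (simp add: inf_commute)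
  have "x = (SUP c\<in>P. inf c x)" by (rule Sup_inf_partition[symmetric])
  also have "\<dots> = (SUP c\<in>P. inf c y)" using assms by (rule SUP_cong[OF refl])
  also have "\<dots> = y" by (rule Sup_inf_partition)
  finally show ?thesis .
qed

lemma inf_OL_pop: "c \<in> P \<Longrightarrow> inf c (OL_pop P f) = inf c (f c)"
proof -
  assume c: "c \<in> P"
  have "inf c (OL_pop P f) = (SUP d\<in>P. inf c (inf d (f d)))"
    unfolding OL_pop_def by (simp add: frame_inf_Sup_distrib image_image)
  also have "\<dots> = inf c (f c)"
  proof (rule antisym)
    have "inf c (inf d (f d)) \<le> inf c (f c)" if "d \<in> P" for d
      using partition_disjoint[OF P c that] by (cases "c = d") (auto simp flip: inf_assoc)
    then show "(SUP d\<in>P. inf c (inf d (f d))) \<le> inf c (f c)"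
      by (rule SUP_least)
    show "inf c (f c) \<le> (SUP d\<in>P. inf c (inf d (f d)))"
      using c by (auto intro: SUP_upper2)
  qed
  finally show ?thesis .
qed

lemma OL_pop_const: "OL_pop P (\<lambda>_. u) = u"
  by (rule partition_eqI) (simp add: inf_OL_pop)

lemma inf_OL_pop_OL_pop: "inf (OL_pop P f) (OL_pop P g) = OL_pop P (\<lambda>c. inf (f c) (g c))"
proof (rule partition_eqI)
  fix c assume c: "c \<in> P"
  have "inf c (inf (OL_pop P f) (OL_pop P g)) = inf (inf c (OL_pop P f)) (inf c (OL_pop P g))"
    by (simp add: inf_aci)
  then show "inf c (inf (OL_pop P f) (OL_pop P g)) = inf c (OL_pop P (\<lambda>c. inf (f c) (g c)))"
    using c by (simp add: inf_OL_pop inf_aci)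
qed

end

lemma SUP_OL_bop:
  fixes f g :: "'b \<Rightarrow> 'a"
  shows "(SUP h\<in>H. OL_bop b (f h) (g h)) = OL_bop b (SUP h\<in>H. f h) (SUP h\<in>H. g h)"
proof -
  have "(SUP h\<in>H. OL_bop b (f h) (g h))
      = sup (SUP h\<in>H. inf b (f h)) (SUP h\<in>H. inf (lcompl b) (g h))"
    unfolding OL_bop_def by (rule complete_lattice_class.SUP_sup_distrib[symmetric])
  also have "\<dots> = OL_bop b (SUP h\<in>H. f h) (SUP h\<in>H. g h)"
    unfolding OL_bop_def by (simp add: frame_inf_Sup_distrib image_image)
  finally show ?thesis .
qed

lemma SUP_OL_pop:
  fixes f :: "'b \<Rightarrow> 'a \<Rightarrow> 'a"
  shows "(SUP h\<in>H. OL_pop P (f h)) = OL_pop P (\<lambda>c. SUP h\<in>H. f h c)"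
proof -
  have "(SUP h\<in>H. OL_pop P (f h)) = (SUP c\<in>P. SUP h\<in>H. inf c (f h c))"
    unfolding OL_pop_def by (rule SUP_commute)
  also have "\<dots> = OL_pop P (\<lambda>c. SUP h\<in>H. f h c)"
    unfolding OL_pop_def by (simp add: frame_inf_Sup_distrib image_image)
  finally show ?thesis .
qed

end

section \<open>The etale space of a B_J-set\<close>

locale BJ_set_over_frame =
  fixes C :: "'x set"
    and bop :: "'a::complete_lattice \<Rightarrow> 'x \<Rightarrow> 'x \<Rightarrow> 'x"
    and pop :: "'a set \<Rightarrow> ('a \<Rightarrow> 'x) \<Rightarrow> 'x"
  assumes frame_law: "frame_law TYPE('a)"
    and BJ_set: "BJ_set C bop pop"
begin

lemma bop_closed: "b \<in> compl_opens \<Longrightarrow> x \<in> C \<Longrightarrow> y \<in> C \<Longrightarrow> bop b x y \<in> C"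
  and pop_closed: "P \<in> partitions \<Longrightarrow> xs \<in> P \<rightarrow>\<^sub>E C \<Longrightarrow> pop P xs \<in> C"
  and bop_idem: "b \<in> compl_opens \<Longrightarrow> x \<in> C \<Longrightarrow> bop b x x = x"
  and bop_bop_left: "b \<in> compl_opens \<Longrightarrow> x \<in> C \<Longrightarrow> y \<in> C \<Longrightarrow> z \<in> C \<Longrightarrow>
      bop b (bop b x y) z = bop b x z"
  and bop_bop_right: "b \<in> compl_opens \<Longrightarrow> x \<in> C \<Longrightarrow> y \<in> C \<Longrightarrow> z \<in> C \<Longrightarrow>
      bop b x (bop b y z) = bop b x z"
  and bop_lcompl: "b \<in> compl_opens \<Longrightarrow> x \<in> C \<Longrightarrow> y \<in> C \<Longrightarrow> bop (lcompl b) x y = bop b y x"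
  and bop_inf: "b \<in> compl_opens \<Longrightarrow> c \<in> compl_opens \<Longrightarrow> x \<in> C \<Longrightarrow> y \<in> C \<Longrightarrow>
      bop (inf b c) x y = bop b (bop c x y) y"
  and bop_pop: "P \<in> partitions \<Longrightarrow> xs \<in> P \<rightarrow>\<^sub>E C \<Longrightarrow> b \<in> P \<Longrightarrow> bop b (pop P xs) (xs b) = xs b"
  using BJ_set unfolding BJ_set_def by simp_all

lemma equiv_b_refl: "b \<in> compl_opens \<Longrightarrow> x \<in> C \<Longrightarrow> equiv_b bop b x x"
  unfolding equiv_b_def by (rule bop_idem)

lemma equiv_b_sym:
  "b \<in> compl_opens \<Longrightarrow> x \<in> C \<Longrightarrow> y \<in> C \<Longrightarrow> equiv_b bop b x y \<Longrightarrow> equiv_b bop b y x"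
  unfolding equiv_b_def using bop_bop_left[of b x y x] bop_idem[of b x] by simp

lemma equiv_b_trans:
  "b \<in> compl_opens \<Longrightarrow> x \<in> C \<Longrightarrow> y \<in> C \<Longrightarrow> z \<in> C \<Longrightarrow>
    equiv_b bop b x y \<Longrightarrow> equiv_b bop b y z \<Longrightarrow> equiv_b bop b x z"
  unfolding equiv_b_def using bop_bop_left[of b x y z] by simp

lemma equiv_b_antimono:
  assumes "b \<in> compl_opens" and "b' \<in> compl_opens" and "b' \<le> b"
    and "x \<in> C" and "y \<in> C" and "equiv_b bop b x y"
  shows "equiv_b bop b' x y"
proof -
  have "bop b' x y = bop (inf b' b) x y" using \<open>b' \<le> b\<close> by (simp add: inf_absorb1)
  also have "\<dots> = bop b' (bop b x y) y" using assms by (simp add: bop_inf)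
  also have "\<dots> = y" using assms by (simp add: equiv_b_def bop_idem)
  finally show ?thesis unfolding equiv_b_def .
qed

lemma equiv_b_inf_trans:
  assumes "b \<in> compl_opens" and "c \<in> compl_opens" and "x \<in> C" and "y \<in> C" and "z \<in> C"
    and "equiv_b bop b x y" and "equiv_b bop c y z"
  shows "equiv_b bop (inf b c) x z"
proof -
  have bc: "inf b c \<in> compl_opens" using inf_in_compl_opens[OF frame_law] assms(1,2) .
  show ?thesis
    using equiv_b_antimono[OF assms(1) bc _ assms(3,4,6)] equiv_b_antimono[OF assms(2) bc _ assms(4,5,7)]
      equiv_b_trans[OF bc assms(3-5)] by simp
qed

lemma equiv_b_bop_left: "c \<in> compl_opens \<Longrightarrow> y \<in> C \<Longrightarrow> z \<in> C \<Longrightarrow> equiv_b bop c y (bop c y z)"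
  unfolding equiv_b_def using bop_bop_right[of c y y z] bop_idem[of c y] by simp

lemma equiv_b_bop_right:
  "c \<in> compl_opens \<Longrightarrow> y \<in> C \<Longrightarrow> z \<in> C \<Longrightarrow> equiv_b bop (lcompl c) z (bop c y z)"
  unfolding equiv_b_def using bop_lcompl[of c z "bop c y z"] bop_bop_left[of c y z z] bop_closed
  by simp

lemma equiv_b_pop:
  "P \<in> partitions \<Longrightarrow> xs \<in> P \<rightarrow>\<^sub>E C \<Longrightarrow> c \<in> P \<Longrightarrow> equiv_b bop c (pop P xs) (xs c)"
  unfolding equiv_b_def by (rule bop_pop)

lemma equiv_p_refl: "p \<in> locale_points \<Longrightarrow> x \<in> C \<Longrightarrow> equiv_p bop p x x"
  unfolding equiv_p_def using top_in_compl_opens top_in_locale_point equiv_b_refl by blast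

lemma equiv_p_sym:
  "x \<in> C \<Longrightarrow> y \<in> C \<Longrightarrow> equiv_p bop p x y \<Longrightarrow> equiv_p bop p y x"
  unfolding equiv_p_def using equiv_b_sym by blast

lemma equiv_p_trans:
  assumes "p \<in> locale_points" and "x \<in> C" and "y \<in> C" and "z \<in> C"
    and "equiv_p bop p x y" and "equiv_p bop p y z"
  shows "equiv_p bop p x z"
proof -
  obtain b c where "b \<in> compl_opens" "b \<in> p" "equiv_b bop b x y"
    and "c \<in> compl_opens" "c \<in> p" "equiv_b bop c y z"
    using assms(5,6) unfolding equiv_p_def by blast
  then have "inf b c \<in> compl_opens" "inf b c \<in> p" "equiv_b bop (inf b c) x z"
    using assms(2-4) inf_in_compl_opens[OF frame_law] inf_in_locale_point_iff[OF assms(1)]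
      equiv_b_inf_trans
    by simp_all
  then show ?thesis unfolding equiv_p_def by blast
qed

lemma stalk_class_eq_iff:
  assumes p: "p \<in> locale_points" and x: "x \<in> C" and y: "y \<in> C"
  shows "stalk_class C bop p x = stalk_class C bop p y \<longleftrightarrow> equiv_p bop p x y"
proof
  assume "stalk_class C bop p x = stalk_class C bop p y"
  moreover have "y \<in> stalk_class C bop p y"
    unfolding stalk_class_def using equiv_p_refl[OF p y] y by simp
  ultimately show "equiv_p bop p x y" unfolding stalk_class_def by blast
next
  assume xy: "equiv_p bop p x y"
  have "equiv_p bop p x z \<longleftrightarrow> equiv_p bop p y z" if "z \<in> C" for z
    using equiv_p_trans[OF p x y that xy] equiv_p_trans[OF p y x that equiv_p_sym[OF x y xy]] by blast
  then show "stalk_class C bop p x = stalk_class C bop p y"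
    unfolding stalk_class_def by blast
qed

definition equality_extent :: "'x \<Rightarrow> 'x \<Rightarrow> 'a" where
  "equality_extent x y = Sup {b \<in> compl_opens. equiv_b bop b x y}"

lemma le_equality_extent: "b \<in> compl_opens \<Longrightarrow> equiv_b bop b x y \<Longrightarrow> b \<le> equality_extent x y"
  unfolding equality_extent_def by (simp add: Sup_upper)

lemma equality_extent_refl: "x \<in> C \<Longrightarrow> equality_extent x x = top"
  using le_equality_extent[OF top_in_compl_opens equiv_b_refl[OF top_in_compl_opens]]
  by (simp add: top_unique)

lemma equality_extent_sym: "x \<in> C \<Longrightarrow> y \<in> C \<Longrightarrow> equality_extent x y = equality_extent y x"
proof -
  assume "x \<in> C" "y \<in> C"
  then have "{b \<in> compl_opens. equiv_b bop b x y} = {b \<in> compl_opens. equiv_b bop b y x}"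
    using equiv_b_sym by blast
  then show ?thesis unfolding equality_extent_def by simp
qed

lemma equiv_p_iff_equality_extent:
  "p \<in> locale_points \<Longrightarrow> equiv_p bop p x y \<longleftrightarrow> equality_extent x y \<in> p"
  unfolding equiv_p_def equality_extent_def by (auto simp: Sup_in_locale_point_iff)

lemma inf_equality_extent_le:
  assumes c: "c \<in> compl_opens" and "x \<in> C" "y \<in> C" "w \<in> C" and "equiv_b bop c y w"
  shows "inf c (equality_extent x y) \<le> equality_extent x w"
proof -
  have "inf c b \<le> equality_extent x w" if "b \<in> compl_opens" "equiv_b bop b x y" for b
    using that assms equiv_b_inf_trans[of b c x y w] inf_in_compl_opens[OF frame_law, of b c]
      le_equality_extent[of "inf b c" x w] by (simp add: inf_commute)
  then show ?thesis
    unfolding equality_extent_def frame_inf_Sup_distrib[OF frame_law] by (auto intro: SUP_least)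
qed

lemma inf_equality_extent_cong:
  assumes "c \<in> compl_opens" and "x \<in> C" "y \<in> C" "w \<in> C" and "equiv_b bop c y w"
  shows "inf c (equality_extent x y) = inf c (equality_extent x w)"
  using inf_equality_extent_le[OF assms] inf_equality_extent_le[OF assms(1,2,4,3) equiv_b_sym[OF assms(1,3,4,5)]]
  by (simp add: antisym)

definition section_open :: "'x \<Rightarrow> 'x \<Rightarrow> 'a" where
  "section_open x = restrict (equality_extent x) C"

lemma section_open_bop:
  assumes x: "x \<in> C" and c: "c \<in> compl_opens" and y: "y \<in> C" and z: "z \<in> C"
  shows "section_open x (bop c y z) = OL_bop c (section_open x y) (section_open x z)"
proof -
  have w: "bop c y z \<in> C" using bop_closed[OF c y z] .
  have "equality_extent x (bop c y z) = OL_bop c (equality_extent x y) (equality_extent x z)"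
  proof (rule lcompl_split_eqI[OF frame_law c])
    show "inf c (equality_extent x (bop c y z)) = inf c (OL_bop c (equality_extent x y) (equality_extent x z))"
      using inf_equality_extent_cong[OF c x y w equiv_b_bop_left[OF c y z]]
      by (simp add: inf_OL_bop[OF frame_law c])
    show "inf (lcompl c) (equality_extent x (bop c y z))
        = inf (lcompl c) (OL_bop c (equality_extent x y) (equality_extent x z))"
      using inf_equality_extent_cong[OF lcompl_in_compl_opens[OF frame_law c] x z w
          equiv_b_bop_right[OF c y z]]
      by (simp add: inf_lcompl_OL_bop[OF frame_law c])
  qed
  then show ?thesis unfolding section_open_def using w y z by simp
qed

lemma section_open_pop:
  assumes x: "x \<in> C" and P: "P \<in> partitions" and ys: "ys \<in> P \<rightarrow>\<^sub>E C"
  shows "section_open x (pop P ys) = OL_pop P (\<lambda>c. section_open x (ys c))"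
proof -
  have Y: "pop P ys \<in> C" using pop_closed[OF P ys] .
  have "equality_extent x (pop P ys) = OL_pop P (\<lambda>c. equality_extent x (ys c))"
  proof (rule partition_eqI[OF frame_law P])
    fix c assume c: "c \<in> P"
    have "inf c (equality_extent x (pop P ys)) = inf c (equality_extent x (ys c))"
      using inf_equality_extent_cong[OF _ x Y _ equiv_b_pop[OF P ys c]]
        partition_subset_compl_opens[OF frame_law P] c ys by blast
    then show "inf c (equality_extent x (pop P ys)) = inf c (OL_pop P (\<lambda>c. equality_extent x (ys c)))"
      by (simp add: inf_OL_pop[OF frame_law P c])
  qed
  moreover have "OL_pop P (\<lambda>c. section_open x (ys c)) = OL_pop P (\<lambda>c. equality_extent x (ys c))"
    unfolding OL_pop_def section_open_def using ys by (auto intro!: SUP_cong)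
  ultimately show ?thesis unfolding section_open_def using Y by simp
qed

abbreviation etale_opens :: "('x \<Rightarrow> 'a) set" where
  "etale_opens \<equiv> etale_frame C bop pop"

lemma etale_opensI:
  assumes "h \<in> extensional C"
    and "\<And>b x y. b \<in> compl_opens \<Longrightarrow> x \<in> C \<Longrightarrow> y \<in> C \<Longrightarrow> h (bop b x y) = OL_bop b (h x) (h y)"
    and "\<And>P xs. P \<in> partitions \<Longrightarrow> xs \<in> P \<rightarrow>\<^sub>E C \<Longrightarrow> h (pop P xs) = OL_pop P (\<lambda>b. h (xs b))"
  shows "h \<in> etale_opens"
  unfolding etale_frame_def BJ_hom_def using assms by blast

lemma etale_opens_bop:
  "h \<in> etale_opens \<Longrightarrow> b \<in> compl_opens \<Longrightarrow> x \<in> C \<Longrightarrow> y \<in> C \<Longrightarrow>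
    h (bop b x y) = OL_bop b (h x) (h y)"
  and etale_opens_pop:
  "h \<in> etale_opens \<Longrightarrow> P \<in> partitions \<Longrightarrow> xs \<in> P \<rightarrow>\<^sub>E C \<Longrightarrow>
    h (pop P xs) = OL_pop P (\<lambda>b. h (xs b))"
  and etale_opens_extensional: "h \<in> etale_opens \<Longrightarrow> h \<in> extensional C"
  unfolding etale_frame_def BJ_hom_def by blast+

lemma section_open_in_etale_opens: "x \<in> C \<Longrightarrow> section_open x \<in> etale_opens"
  by (rule etale_opensI) (simp add: section_open_def, simp_all add: section_open_bop section_open_pop)

definition const_map :: "'a \<Rightarrow> 'x \<Rightarrow> 'a" where
  "const_map u = restrict (\<lambda>_. u) C"

definition inf_map :: "('x \<Rightarrow> 'a) \<Rightarrow> ('x \<Rightarrow> 'a) \<Rightarrow> 'x \<Rightarrow> 'a" where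
  "inf_map h k = restrict (\<lambda>y. inf (h y) (k y)) C"

definition Sup_map :: "('x \<Rightarrow> 'a) set \<Rightarrow> 'x \<Rightarrow> 'a" where
  "Sup_map H = restrict (\<lambda>y. SUP h\<in>H. h y) C"

lemma const_map_in_etale_opens: "const_map u \<in> etale_opens"
proof (rule etale_opensI)
  fix P :: "'a set" and xs assume P: "P \<in> partitions" and xs: "xs \<in> P \<rightarrow>\<^sub>E C"
  have "OL_pop P (\<lambda>b. const_map u (xs b)) = OL_pop P (\<lambda>_. u)"
    unfolding OL_pop_def const_map_def using xs by (auto intro!: SUP_cong)
  then show "const_map u (pop P xs) = OL_pop P (\<lambda>b. const_map u (xs b))"
    using pop_closed[OF P xs] OL_pop_const[OF frame_law P] by (simp add: const_map_def)
qed (simp_all add: const_map_def bop_closed OL_bop_self[OF frame_law])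

lemma inf_map_in_etale_opens:
  assumes h: "h \<in> etale_opens" and k: "k \<in> etale_opens"
  shows "inf_map h k \<in> etale_opens"
proof (rule etale_opensI)
  fix P :: "'a set" and xs assume P: "P \<in> partitions" and xs: "xs \<in> P \<rightarrow>\<^sub>E C"
  have "OL_pop P (\<lambda>b. inf_map h k (xs b)) = OL_pop P (\<lambda>b. inf (h (xs b)) (k (xs b)))"
    unfolding OL_pop_def inf_map_def using xs by (auto intro!: SUP_cong)
  then show "inf_map h k (pop P xs) = OL_pop P (\<lambda>b. inf_map h k (xs b))"
    using pop_closed[OF P xs] etale_opens_pop[OF h P xs] etale_opens_pop[OF k P xs]
    by (simp add: inf_map_def inf_OL_pop_OL_pop[OF frame_law P])
qed (simp_all add: inf_map_def bop_closed etale_opens_bop[OF h] etale_opens_bop[OF k]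
    inf_OL_bop_OL_bop[OF frame_law])

lemma Sup_map_in_etale_opens:
  assumes H: "H \<subseteq> etale_opens"
  shows "Sup_map H \<in> etale_opens"
proof (rule etale_opensI)
  fix b :: 'a and x y assume b: "b \<in> compl_opens" and x: "x \<in> C" and y: "y \<in> C"
  have "(SUP h\<in>H. h (bop b x y)) = (SUP h\<in>H. OL_bop b (h x) (h y))"
    using H etale_opens_bop[OF _ b x y] by (auto intro!: SUP_cong)
  then show "Sup_map H (bop b x y) = OL_bop b (Sup_map H x) (Sup_map H y)"
    using bop_closed[OF b x y] x y by (simp add: Sup_map_def SUP_OL_bop[OF frame_law])
next
  fix P :: "'a set" and xs assume P: "P \<in> partitions" and xs: "xs \<in> P \<rightarrow>\<^sub>E C"
  have "(SUP h\<in>H. h (pop P xs)) = (SUP h\<in>H. OL_pop P (\<lambda>c. h (xs c)))"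
    using H etale_opens_pop[OF _ P xs] by (auto intro!: SUP_cong)
  also have "\<dots> = OL_pop P (\<lambda>c. Sup_map H (xs c))"
    unfolding SUP_OL_pop[OF frame_law] unfolding OL_pop_def Sup_map_def
    using xs by (auto intro!: SUP_cong)
  finally show "Sup_map H (pop P xs) = OL_pop P (\<lambda>c. Sup_map H (xs c))"
    using pop_closed[OF P xs] by (simp add: Sup_map_def)
qed (simp add: Sup_map_def)

lemma etale_opens_antisym:
  "h \<in> etale_opens \<Longrightarrow> k \<in> etale_opens \<Longrightarrow> pointwise_le C h k \<Longrightarrow> pointwise_le C k h \<Longrightarrow> h = k"
  unfolding pointwise_le_def
  by (rule extensionalityI[OF etale_opens_extensional etale_opens_extensional]) (auto intro: antisym)

lemma etale_point_iff:
  "frame_point etale_opens (pointwise_le C) Q \<longleftrightarrow> Q \<subseteq> etale_opens \<and> const_map top \<in> Q \<and>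
    (\<forall>h\<in>etale_opens. \<forall>k\<in>etale_opens. inf_map h k \<in> Q \<longleftrightarrow> h \<in> Q \<and> k \<in> Q) \<and>
    (\<forall>H. H \<subseteq> etale_opens \<longrightarrow> (Sup_map H \<in> Q \<longleftrightarrow> (\<exists>h\<in>H. h \<in> Q)))"
proof (rule frame_point_iff[OF etale_opens_antisym])
  show "is_glb_in etale_opens (pointwise_le C) {} (const_map top)"
    unfolding is_glb_in_def pointwise_le_def
    using const_map_in_etale_opens[of top] by (simp add: const_map_def)
  show "is_glb_in etale_opens (pointwise_le C) {h, k} (inf_map h k)"
    if "h \<in> etale_opens" "k \<in> etale_opens" for h k
    using that inf_map_in_etale_opens[OF that] unfolding is_glb_in_def pointwise_le_def
    by (auto simp: inf_map_def)
  show "is_lub_in etale_opens (pointwise_le C) H (Sup_map H)"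
    if "H \<subseteq> etale_opens" for H
    using that Sup_map_in_etale_opens[OF that] unfolding is_lub_in_def pointwise_le_def
    by (auto simp: Sup_map_def intro: SUP_upper SUP_least)
qed

context
  fixes Q :: "('x \<Rightarrow> 'a) set"
  assumes Q: "frame_point etale_opens (pointwise_le C) Q"
begin

lemma etale_point_subset: "Q \<subseteq> etale_opens"
  and const_map_top_in_etale_point: "const_map top \<in> Q"
  and inf_map_in_etale_point_iff:
    "h \<in> etale_opens \<Longrightarrow> k \<in> etale_opens \<Longrightarrow> inf_map h k \<in> Q \<longleftrightarrow> h \<in> Q \<and> k \<in> Q"
  and Sup_map_in_etale_point_iff: "H \<subseteq> etale_opens \<Longrightarrow> Sup_map H \<in> Q \<longleftrightarrow> (\<exists>h\<in>H. h \<in> Q)"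
  using Q unfolding etale_point_iff by blast+

end

lemma etale_open_inf_cong:
  assumes h: "h \<in> etale_opens" and b: "b \<in> compl_opens" and "x \<in> C" "y \<in> C"
    and "equiv_b bop b x y"
  shows "inf b (h x) = inf b (h y)"
proof -
  have "h y = OL_bop b (h x) (h y)"
    using etale_opens_bop[OF assms(1-4)] assms(5) by (simp add: equiv_b_def)
  then show ?thesis by (metis inf_OL_bop[OF frame_law b])
qed

lemma inf_map_section_open:
  assumes h: "h \<in> etale_opens" and x: "x \<in> C"
  shows "inf_map h (section_open x) = inf_map (const_map (h x)) (section_open x)"
proof
  fix y show "inf_map h (section_open x) y = inf_map (const_map (h x)) (section_open x) y"
  proof (cases "y \<in> C")
    case True
    let ?S = "{b \<in> compl_opens. equiv_b bop b x y}"
    have "inf (h y) (equality_extent x y) = (SUP b\<in>?S. inf b (h y))"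
      unfolding equality_extent_def frame_inf_Sup_distrib[OF frame_law] by (simp add: inf_commute)
    also have "\<dots> = (SUP b\<in>?S. inf b (h x))"
      using etale_open_inf_cong[OF h _ x True] by (auto intro!: SUP_cong)
    also have "\<dots> = inf (h x) (equality_extent x y)"
      unfolding equality_extent_def frame_inf_Sup_distrib[OF frame_law] by (simp add: inf_commute)
    finally show ?thesis
      using True by (simp add: inf_map_def const_map_def section_open_def)
  qed (simp add: inf_map_def)
qed

lemma Sup_map_section_open: "Sup_map (section_open ` C) = const_map top"
proof
  fix y show "Sup_map (section_open ` C) y = const_map top y"
  proof (cases "y \<in> C")
    case True
    then have "section_open y y \<le> (SUP h\<in>section_open ` C. h y)"
      by (auto intro: SUP_upper)
    then show ?thesis
      using True by (simp add: Sup_map_def const_map_def section_open_def equality_extent_refl top_unique)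
  qed (simp add: Sup_map_def const_map_def)
qed

text \<open>The image of the point Q under the etale map, whose inverse image sends u to the
  constant map at u.\<close>
definition base_point :: "('x \<Rightarrow> 'a) set \<Rightarrow> 'a set" where
  "base_point Q = {u. const_map u \<in> Q}"

definition fibre_point :: "'a set \<Rightarrow> 'x \<Rightarrow> ('x \<Rightarrow> 'a) set" where
  "fibre_point p x = {h \<in> etale_opens. h x \<in> p}"

context
  fixes Q :: "('x \<Rightarrow> 'a) set"
  assumes Q: "frame_point etale_opens (pointwise_le C) Q"
begin

lemma base_point_in_locale_points: "base_point Q \<in> locale_points"
  unfolding locale_points_iff base_point_def
proof (intro conjI allI)
  show "top \<in> {u. const_map u \<in> Q}" using const_map_top_in_etale_point[OF Q] by simp
  fix a b :: 'a
  have "const_map (inf a b) = inf_map (const_map a) (const_map b)"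
    by (auto simp: const_map_def inf_map_def)
  then show "inf a b \<in> {u. const_map u \<in> Q} \<longleftrightarrow> a \<in> {u. const_map u \<in> Q} \<and> b \<in> {u. const_map u \<in> Q}"
    using inf_map_in_etale_point_iff[OF Q const_map_in_etale_opens const_map_in_etale_opens] by simp
next
  fix S :: "'a set"
  have "const_map (Sup S) = Sup_map (const_map ` S)"
    by (auto simp: const_map_def Sup_map_def image_image)
  moreover have "const_map ` S \<subseteq> etale_opens" using const_map_in_etale_opens by blast
  ultimately show "Sup S \<in> {u. const_map u \<in> Q} \<longleftrightarrow> (\<exists>y\<in>S. y \<in> {u. const_map u \<in> Q})"
    using Sup_map_in_etale_point_iff[OF Q] by simp
qed

lemma ex_section_open_in_etale_point: "\<exists>x\<in>C. section_open x \<in> Q"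
  using Sup_map_in_etale_point_iff[OF Q, of "section_open ` C"] section_open_in_etale_opens
    Sup_map_section_open const_map_top_in_etale_point[OF Q] by auto

lemma etale_point_eq_fibre_point:
  assumes x: "x \<in> C" and xQ: "section_open x \<in> Q"
  shows "Q = fibre_point (base_point Q) x"
proof -
  have "h \<in> Q \<longleftrightarrow> const_map (h x) \<in> Q" if h: "h \<in> etale_opens" for h
  proof -
    have "h \<in> Q \<longleftrightarrow> inf_map h (section_open x) \<in> Q"
      using inf_map_in_etale_point_iff[OF Q h section_open_in_etale_opens[OF x]] xQ by simp
    also have "\<dots> \<longleftrightarrow> inf_map (const_map (h x)) (section_open x) \<in> Q"
      by (simp add: inf_map_section_open[OF h x])
    also have "\<dots> \<longleftrightarrow> const_map (h x) \<in> Q"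
      using inf_map_in_etale_point_iff[OF Q const_map_in_etale_opens section_open_in_etale_opens[OF x]] xQ
      by simp
    finally show ?thesis .
  qed
  then show ?thesis
    using etale_point_subset[OF Q] unfolding fibre_point_def base_point_def by auto
qed

end

context
  fixes p :: "'a set" and x :: 'x
  assumes p: "p \<in> locale_points" and x: "x \<in> C"
begin

lemma fibre_point_is_etale_point: "frame_point etale_opens (pointwise_le C) (fibre_point p x)"
  unfolding etale_point_iff fibre_point_def
  using x const_map_in_etale_opens inf_map_in_etale_opens Sup_map_in_etale_opens
  by (auto simp: const_map_def inf_map_def Sup_map_def top_in_locale_point[OF p]
      inf_in_locale_point_iff[OF p] Sup_in_locale_point_iff[OF p])

lemma base_point_fibre_point: "base_point (fibre_point p x) = p"
  unfolding base_point_def fibre_point_def using x const_map_in_etale_opens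
  by (simp add: const_map_def)

lemma section_open_in_fibre_point_iff:
  "y \<in> C \<Longrightarrow> section_open y \<in> fibre_point p x \<longleftrightarrow> equiv_p bop p x y"
  unfolding fibre_point_def using x section_open_in_etale_opens
  by (simp add: section_open_def equality_extent_sym equiv_p_iff_equality_extent[OF p])

end

lemma etale_point_cases:
  assumes "frame_point etale_opens (pointwise_le C) Q"
  obtains p x where "p \<in> locale_points" and "x \<in> C" and "Q = fibre_point p x"
  using ex_section_open_in_etale_point[OF assms] etale_point_eq_fibre_point[OF assms]
    base_point_in_locale_points[OF assms] by blast

definition germ_of_point :: "('x \<Rightarrow> 'a) set \<Rightarrow> 'a set \<times> 'x set" where
  "germ_of_point Q = (base_point Q, {y \<in> C. section_open y \<in> Q})"

definition point_of_germ :: "'a set \<times> 'x set \<Rightarrow> ('x \<Rightarrow> 'a) set" where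
  "point_of_germ z = {h \<in> etale_opens. \<exists>x\<in>snd z. h x \<in> fst z}"

context
  fixes p :: "'a set" and x :: 'x
  assumes p: "p \<in> locale_points" and x: "x \<in> C"
begin

lemma germ_of_fibre_point: "germ_of_point (fibre_point p x) = (p, stalk_class C bop p x)"
  unfolding germ_of_point_def stalk_class_def
  using base_point_fibre_point[OF p x] section_open_in_fibre_point_iff[OF p x] by auto

lemma point_of_germ_stalk_class: "point_of_germ (p, stalk_class C bop p x) = fibre_point p x"
proof -
  have "h x \<in> p" if h: "h \<in> etale_opens" and y: "y \<in> C" "equiv_p bop p x y" "h y \<in> p" for h y
  proof -
    obtain b where b: "b \<in> compl_opens" "b \<in> p" "equiv_b bop b x y"
      using y(2) unfolding equiv_p_def by blast
    then have "inf b (h x) \<in> p"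
      using etale_open_inf_cong[OF h b(1) x y(1) b(3)] y(3) inf_in_locale_point_iff[OF p] by simp
    then show ?thesis using inf_in_locale_point_iff[OF p] by simp
  qed
  then show ?thesis
    unfolding point_of_germ_def fibre_point_def stalk_class_def using x equiv_p_refl[OF p x] by auto
qed

lemma mem_subbasic_iff:
  "(p, stalk_class C bop p x) \<in> subbasic C bop y b \<longleftrightarrow>
    b \<in> p \<and> stalk_class C bop p y = stalk_class C bop p x"
  unfolding subbasic_def using p by auto

end

lemma germ_of_point_in_subbasic_iff:
  assumes Q: "frame_point etale_opens (pointwise_le C) Q" and y: "y \<in> C"
  shows "germ_of_point Q \<in> subbasic C bop y b \<longleftrightarrow> inf_map (const_map b) (section_open y) \<in> Q"
proof -
  obtain p x where p: "p \<in> locale_points" and x: "x \<in> C" and Q_eq: "Q = fibre_point p x"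
    using etale_point_cases[OF Q] .
  have "germ_of_point Q \<in> subbasic C bop y b \<longleftrightarrow> b \<in> p \<and> equiv_p bop p x y"
    unfolding Q_eq germ_of_fibre_point[OF p x] mem_subbasic_iff[OF p x]
    using stalk_class_eq_iff[OF p x y] equiv_p_sym x y by blast
  also have "\<dots> \<longleftrightarrow> const_map b \<in> Q \<and> section_open y \<in> Q"
    unfolding Q_eq section_open_in_fibre_point_iff[OF p x y]
    using x const_map_in_etale_opens by (simp add: fibre_point_def const_map_def)
  also have "\<dots> \<longleftrightarrow> inf_map (const_map b) (section_open y) \<in> Q"
    using inf_map_in_etale_point_iff[OF Q const_map_in_etale_opens section_open_in_etale_opens[OF y]]
    by simp
  finally show ?thesis .
qed

lemma mem_point_of_germ_iff:
  assumes zero_dim: "\<And>u::'a. \<exists>S \<subseteq> compl_opens. u = Sup S"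
    and z: "z \<in> stalk_sum C bop" and h: "h \<in> etale_opens"
  shows "h \<in> point_of_germ z \<longleftrightarrow>
    z \<in> \<Union>{subbasic C bop y b | y b. y \<in> C \<and> b \<in> compl_opens \<and> b \<le> h y}"
proof -
  obtain p x where p: "p \<in> locale_points" and x: "x \<in> C" and z_eq: "z = (p, stalk_class C bop p x)"
    using z unfolding stalk_sum_def by blast
  have "h \<in> point_of_germ z \<longleftrightarrow> h x \<in> p"
    unfolding z_eq point_of_germ_stalk_class[OF p x] fibre_point_def using h by simp
  also have "\<dots> \<longleftrightarrow> z \<in> \<Union>{subbasic C bop y b | y b. y \<in> C \<and> b \<in> compl_opens \<and> b \<le> h y}"
  proof
    assume "h x \<in> p"
    moreover obtain S where "S \<subseteq> compl_opens" "h x = Sup S" using zero_dim by blast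
    ultimately obtain b where "b \<in> compl_opens" "b \<le> h x" "b \<in> p"
      using Sup_in_locale_point_iff[OF p] by (auto intro: Sup_upper)
    then show "z \<in> \<Union>{subbasic C bop y b | y b. y \<in> C \<and> b \<in> compl_opens \<and> b \<le> h y}"
      unfolding z_eq using mem_subbasic_iff[OF p x] x by blast
  next
    assume "z \<in> \<Union>{subbasic C bop y b | y b. y \<in> C \<and> b \<in> compl_opens \<and> b \<le> h y}"
    then obtain y b where y: "y \<in> C" and b: "b \<le> h y" "b \<in> p"
      and cls: "stalk_class C bop p y = stalk_class C bop p x"
      unfolding z_eq using mem_subbasic_iff[OF p x] by blast
    have "fibre_point p y = fibre_point p x"
      using point_of_germ_stalk_class[OF p x] point_of_germ_stalk_class[OF p y] cls by simp
    moreover have "h y \<in> p" using locale_point_mono[OF p b] .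
    ultimately show "h x \<in> p" unfolding fibre_point_def using h by blast
  qed
  finally show ?thesis .
qed

lemma openin_etale_points_germ_of_point_in_subbasic:
  assumes x: "x \<in> C" and b: "b \<in> compl_opens"
  shows "openin (etale_points C bop pop)
    {Q. frame_point etale_opens (pointwise_le C) Q \<and> germ_of_point Q \<in> subbasic C bop x b}"
proof -
  let ?h = "inf_map (const_map b) (section_open x)"
  have "?h \<in> etale_opens"
    using inf_map_in_etale_opens const_map_in_etale_opens section_open_in_etale_opens[OF x] by blast
  then have "openin (etale_points C bop pop) {Q. frame_point etale_opens (pointwise_le C) Q \<and> ?h \<in> Q}"
    unfolding etale_points_def by (rule openin_point_space)
  moreover have "{Q. frame_point etale_opens (pointwise_le C) Q \<and> germ_of_point Q \<in> subbasic C bop x b}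
      = {Q. frame_point etale_opens (pointwise_le C) Q \<and> ?h \<in> Q}"
    using germ_of_point_in_subbasic_iff[OF _ x] by blast
  ultimately show ?thesis by simp
qed

lemma openin_stalk_sum_space_mem_point_of_germ:
  assumes zero_dim: "\<And>u::'a. \<exists>S \<subseteq> compl_opens. u = Sup S" and h: "h \<in> etale_opens"
  shows "openin (stalk_sum_space C bop) {z \<in> stalk_sum C bop. h \<in> point_of_germ z}"
proof -
  let ?W = "\<Union>{subbasic C bop y b | y b. y \<in> C \<and> b \<in> compl_opens \<and> b \<le> h y}"
  have "openin (topology_generated_by {subbasic C bop x b | x b. x \<in> C \<and> b \<in> compl_opens}) ?W"
    by (rule openin_Union) (auto intro: topology_generated_by_Basis)
  moreover have "{z \<in> stalk_sum C bop. h \<in> point_of_germ z} = ?W \<inter> stalk_sum C bop"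
    using mem_point_of_germ_iff[OF zero_dim _ h] by blast
  ultimately show ?thesis
    unfolding stalk_sum_space_def openin_subtopology by blast
qed

lemma homeomorphic_maps_germ_of_point:
  assumes zero_dim: "\<And>u::'a. \<exists>S \<subseteq> compl_opens. u = Sup S"
  shows "homeomorphic_maps (etale_points C bop pop) (stalk_sum_space C bop)
    germ_of_point point_of_germ"
  unfolding etale_points_def point_space_def stalk_sum_space_def
proof (rule homeomorphic_maps_subtopology_generated)
  let ?pts = "{Q. frame_point etale_opens (pointwise_le C) Q}"
  show "?pts \<subseteq> \<Union>{{Q. frame_point etale_opens (pointwise_le C) Q \<and> h \<in> Q} | h. h \<in> etale_opens}"
    using const_map_top_in_etale_point const_map_in_etale_opens by blast
  show "stalk_sum C bop \<subseteq> \<Union>{subbasic C bop x b | x b. x \<in> C \<and> b \<in> compl_opens}"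
    unfolding stalk_sum_def using mem_subbasic_iff top_in_locale_point top_in_compl_opens by blast
  show "germ_of_point \<in> ?pts \<rightarrow> stalk_sum C bop"
    using germ_of_fibre_point unfolding stalk_sum_def by (blast elim: etale_point_cases)
  show point_of_germ: "point_of_germ \<in> stalk_sum C bop \<rightarrow> ?pts"
    unfolding stalk_sum_def using point_of_germ_stalk_class fibre_point_is_etale_point by auto
  show "point_of_germ (germ_of_point Q) = Q" if "Q \<in> ?pts" for Q
    using that germ_of_fibre_point point_of_germ_stalk_class by (auto elim: etale_point_cases)
  show "germ_of_point (point_of_germ z) = z" if "z \<in> stalk_sum C bop" for z
    using that germ_of_fibre_point point_of_germ_stalk_class unfolding stalk_sum_def by auto
  show "openin (subtopology (topology_generated_by
      {{Q. frame_point etale_opens (pointwise_le C) Q \<and> h \<in> Q} | h. h \<in> etale_opens}) ?pts)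
      {Q \<in> ?pts. germ_of_point Q \<in> U}"
    if "U \<in> {subbasic C bop x b | x b. x \<in> C \<and> b \<in> compl_opens}" for U
    using that openin_etale_points_germ_of_point_in_subbasic
    unfolding etale_points_def point_space_def by auto
  show "openin (subtopology (topology_generated_by
      {subbasic C bop x b | x b. x \<in> C \<and> b \<in> compl_opens}) (stalk_sum C bop))
      {z \<in> stalk_sum C bop. point_of_germ z \<in> V}"
    if basic: "V \<in> {{Q. frame_point etale_opens (pointwise_le C) Q \<and> h \<in> Q} | h. h \<in> etale_opens}"
    for V
  proof -
    obtain h where h: "h \<in> etale_opens"
      and V: "V = {Q. frame_point etale_opens (pointwise_le C) Q \<and> h \<in> Q}"
      using basic by blast
    have "{z \<in> stalk_sum C bop. point_of_germ z \<in> V} = {z \<in> stalk_sum C bop. h \<in> point_of_germ z}"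
      unfolding V using point_of_germ by blast
    then show ?thesis
      using openin_stalk_sum_space_mem_point_of_germ[OF zero_dim h]
      unfolding stalk_sum_space_def by simp
  qed
qed
end

theorem proposition2p20:
  fixes C :: "'x set"
    and bop :: "'a::complete_lattice \<Rightarrow> 'x \<Rightarrow> 'x \<Rightarrow> 'x"
    and pop :: "'a set \<Rightarrow> ('a \<Rightarrow> 'x) \<Rightarrow> 'x"
  assumes "frame_law TYPE('a)"
    and "(bot::'a) \<noteq> top"
    and "ultraparacompact TYPE('a)"
    and "BJ_set C bop pop"
  shows "etale_points C bop pop homeomorphic_space stalk_sum_space C bop"
proof -
  interpret BJ_set_over_frame C bop pop
    using assms(1,4) by unfold_locales
  have "\<exists>S \<subseteq> compl_opens. u = Sup S" for u :: 'a
    using assms(3) unfolding ultraparacompact_def by blast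
  then show ?thesis
    unfolding homeomorphic_space_def using homeomorphic_maps_germ_of_point by blast
qed

end
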